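(* In the compulsory constrained two-facility location game described in the context, every deterministic strategyproof mechanism has approximation ratio at least $3$ under the maximum cost objective.
   Context: An instance consists of $n$ agents with private locations $x_1,\dots,x_n\in\mathbb{R}$, each served by both facilities $F_1,F_2$, and a finite multiset $A=\{a_1\le\dots\le a_m\}$ of real alternative locations. A deterministic mechanism $f$ maps each instance (reported locations and $A$) to $(y_1,y_2)$ with $y_1\in A$, $y_2\in A\setminus\{y_1\}$ (one copy removed). Agent $j$'s cost is $\max\{|y_1-x_j|,|y_2-x_j|\}$; the maximum cost is $\max_j$ of agents' costs. $f$ is strategyproof if no agent can strictly decrease her true cost by misreporting her own location, whatever the others report. The approximation ratio is the supremum over instances of $f$'s maximum cost divided by the optimal (minimum over feasible outcomes) maximum cost. *)

theory Defs
  imports Complex_Main "HOL-Library.Multiset" "HOL-Library.Extended_Real"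
begin

text \<open>An instance: reported agent locations xs (a list, agents indexed 0..n-1) and
  a finite multiset A of alternative locations.\<close>

definition valid_instance :: "real list \<Rightarrow> real multiset \<Rightarrow> bool" where
  "valid_instance xs A \<longleftrightarrow> xs \<noteq> [] \<and> size A \<ge> 2"

definition feasible :: "real multiset \<Rightarrow> real \<times> real \<Rightarrow> bool" where
  "feasible A y \<longleftrightarrow> fst y \<in># A \<and> snd y \<in># A - {# fst y #}"

definition agent_cost :: "real \<Rightarrow> real \<times> real \<Rightarrow> real" where
  "agent_cost x y = max \<bar>fst y - x\<bar> \<bar>snd y - x\<bar>"

definition max_cost :: "real list \<Rightarrow> real \<times> real \<Rightarrow> real" where
  "max_cost xs y = Max ((\<lambda>x. agent_cost x y) ` set xs)"

definition opt_cost :: "real list \<Rightarrow> real multiset \<Rightarrow> real" where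
  "opt_cost xs A = Min (max_cost xs ` {y. feasible A y})"

definition mechanism :: "(real list \<Rightarrow> real multiset \<Rightarrow> real \<times> real) \<Rightarrow> bool" where
  "mechanism f \<longleftrightarrow> (\<forall>xs A. valid_instance xs A \<longrightarrow> feasible A (f xs A))"

definition strategyproof :: "(real list \<Rightarrow> real multiset \<Rightarrow> real \<times> real) \<Rightarrow> bool" where
  "strategyproof f \<longleftrightarrow>
     (\<forall>xs A j x'. valid_instance xs A \<longrightarrow> j < length xs \<longrightarrow>
        agent_cost (xs ! j) (f xs A) \<le> agent_cost (xs ! j) (f (xs[j := x']) A))"

text \<open>Approximation ratio: supremum over valid instances of mechanism cost / optimal cost,
  computed in the extended reals (c/0 = \<infinity> for c > 0, 0/0 = 0).\<close>
definition approx_ratio :: "(real list \<Rightarrow> real multiset \<Rightarrow> real \<times> real) \<Rightarrow> ereal" where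
  "approx_ratio f = (SUP p \<in> {(xs, A). valid_instance xs A}.
      ereal (max_cost (fst p) (f (fst p) (snd p))) / ereal (opt_cost (fst p) (snd p)))"

end

theory Submission
  imports Defs
begin

text \<open>Use two agents and the alternatives 0, 0, 2, 2, so that every outcome other than (2,2)
  contains 0 and every outcome other than (0,0) contains 2. At the profile (1 - e, 3) the optimum
  (2,2) costs 1 + e, while any other outcome costs the agent at 3 at least 3; so suppose the
  mechanism chooses (2,2) there. Strategyproofness propagates this choice: at (1 - e, 1 + e) the
  right agent could report 3, which forces (2,2) again; at (-1, 1 + e) the outcome (0,0) would let
  the agent at 1 - e gain by reporting -1. Hence the agent at -1 pays at least 3, whereas (0,0)
  costs only 1 + e.\<close>

lemma agent_cost_ge:
  assumes "z \<in> {fst y, snd y}"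
  shows "\<bar>z - x\<bar> \<le> agent_cost x y"
  using assms by (auto simp: agent_cost_def)

lemma agent_cost_le_max_cost: "x \<in> set xs \<Longrightarrow> agent_cost x y \<le> max_cost xs y"
  unfolding max_cost_def by (rule Max_ge) auto

lemma max_cost_le:
  assumes "xs \<noteq> []" and "\<And>x. x \<in> set xs \<Longrightarrow> agent_cost x y \<le> c"
  shows "max_cost xs y \<le> c"
  using assms unfolding max_cost_def by (subst Max_le_iff) auto

lemma max_cost_nonneg:
  assumes "xs \<noteq> []"
  shows "0 \<le> max_cost xs y"
proof -
  from assms obtain x where "x \<in> set xs"
    by (cases xs) auto
  then have "agent_cost x y \<le> max_cost xs y"
    by (rule agent_cost_le_max_cost)
  moreover have "0 \<le> agent_cost x y"
    by (simp add: agent_cost_def)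
  ultimately show ?thesis
    by linarith
qed

lemma finite_feasible: "finite {y. feasible A y}"
proof (rule finite_subset)
  show "{y. feasible A y} \<subseteq> set_mset A \<times> set_mset A"
    by (auto simp: feasible_def dest: in_diffD)
qed simp

lemma feasible_exists:
  assumes "size A \<ge> 2"
  obtains y where "feasible A y"
proof -
  obtain a where a: "a \<in># A"
    using assms by (metis multiset_nonemptyE not_numeral_le_zero size_empty)
  have "size (A - {#a#}) \<ge> 1"
    using assms a by (simp add: size_Diff_singleton)
  then obtain b where "b \<in># A - {#a#}"
    by (metis multiset_nonemptyE not_one_le_zero size_empty)
  with a have "feasible A (a, b)"
    by (simp add: feasible_def)
  then show thesis ..
qed

lemma opt_cost_le: "feasible A y \<Longrightarrow> opt_cost xs A \<le> max_cost xs y"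
  unfolding opt_cost_def by (rule Min_le) (auto simp: finite_feasible)

lemma opt_cost_nonneg:
  assumes "valid_instance xs A"
  shows "0 \<le> opt_cost xs A"
proof -
  obtain y where "feasible A y"
    using assms feasible_exists unfolding valid_instance_def by blast
  then have "max_cost xs ` {y. feasible A y} \<noteq> {}"
    by blast
  then show ?thesis
    using assms max_cost_nonneg unfolding opt_cost_def valid_instance_def
    by (subst Min_ge_iff) (auto simp: finite_feasible)
qed

lemma approx_ratio_ge_instance:
  "valid_instance xs A \<Longrightarrow>
    ereal (max_cost xs (f xs A)) / ereal (opt_cost xs A) \<le> approx_ratio f"
  unfolding approx_ratio_def by (rule SUP_upper2[of "(xs, A)"]) auto

lemma ereal_divide_ge:
  fixes a b c d :: real
  assumes "0 < c" "c \<le> a" "0 \<le> b" "b \<le> d"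
  shows "ereal (c / d) \<le> ereal a / ereal b"
proof (cases "b = 0")
  case True
  then show ?thesis
    using assms by (simp add: divide_ereal_def)
next
  case False
  then have "c / d \<le> a / b"
    using assms by (intro frac_le) auto
  then show ?thesis
    using False by simp
qed

definition alts :: "real multiset" where
  "alts = {#0, 0, 2, 2#}"

lemma valid_instance_alts: "xs \<noteq> [] \<Longrightarrow> valid_instance xs alts"
  by (simp add: valid_instance_def alts_def)

lemma feasible_alts_0_0: "feasible alts (0, 0)"
  and feasible_alts_2_2: "feasible alts (2, 2)"
  by (auto simp: feasible_def alts_def)

lemma feasible_alts_values:
  assumes "feasible alts y"
  shows "fst y \<in> {0, 2}" and "snd y \<in> {0, 2}"
  using assms by (auto simp: feasible_def alts_def dest: in_diffD)

lemma feasible_alts_uses_0: "feasible alts y \<Longrightarrow> y \<noteq> (2, 2) \<Longrightarrow> 0 \<in> {fst y, snd y}"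
  using feasible_alts_values[of y] by (auto simp: prod_eq_iff)

lemma feasible_alts_uses_2: "feasible alts y \<Longrightarrow> y \<noteq> (0, 0) \<Longrightarrow> 2 \<in> {fst y, snd y}"
  using feasible_alts_values[of y] by (auto simp: prod_eq_iff)

context
  fixes f :: "real list \<Rightarrow> real multiset \<Rightarrow> real \<times> real"
  assumes mech: "mechanism f" and sp: "strategyproof f"
begin

lemma feasible_alts_outcome: "xs \<noteq> [] \<Longrightarrow> feasible alts (f xs alts)"
  using mech valid_instance_alts unfolding mechanism_def by blast

lemma no_gain_from_misreport:
  "xs \<noteq> [] \<Longrightarrow> j < length xs \<Longrightarrow>
    agent_cost (xs ! j) (f xs alts) \<le> agent_cost (xs ! j) (f (xs[j := x']) alts)"
  using sp valid_instance_alts unfolding strategyproof_def by blast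

lemma outcome_centre_2_2:
  assumes "e > 0" and "f [1 - e, 3] alts = (2, 2)"
  shows "f [1 - e, 1 + e] alts = (2, 2)"
proof (rule ccontr)
  let ?y = "f [1 - e, 1 + e] alts"
  assume "?y \<noteq> (2, 2)"
  then have "\<bar>0 - (1 + e)\<bar> \<le> agent_cost (1 + e) ?y"
    by (intro agent_cost_ge feasible_alts_uses_0 feasible_alts_outcome) simp
  also have "\<dots> \<le> agent_cost (1 + e) (f [1 - e, 3] alts)"
    using no_gain_from_misreport[of "[1 - e, 1 + e]" 1 3] by simp
  also have "\<dots> = \<bar>1 - e\<bar>"
    using assms by (simp add: agent_cost_def)
  finally show False
    using \<open>e > 0\<close> by simp
qed

lemma outcome_left_not_0_0:
  assumes "e > 0" and "f [1 - e, 3] alts = (2, 2)"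
  shows "f [-1, 1 + e] alts \<noteq> (0, 0)"
proof
  assume "f [-1, 1 + e] alts = (0, 0)"
  then have "agent_cost (1 - e) (f [-1, 1 + e] alts) = \<bar>1 - e\<bar>"
    by (simp add: agent_cost_def)
  also have "\<dots> < agent_cost (1 - e) (f [1 - e, 1 + e] alts)"
    using outcome_centre_2_2[OF assms] \<open>e > 0\<close> by (simp add: agent_cost_def)
  also have "\<dots> \<le> agent_cost (1 - e) (f [-1, 1 + e] alts)"
    using no_gain_from_misreport[of "[1 - e, 1 + e]" 0 "-1"] by simp
  finally show False
    by simp
qed

lemma instance_cost_ge_3_opt_le:
  assumes "e > 0"
  obtains xs where "xs \<noteq> []" and "3 \<le> max_cost xs (f xs alts)"
    and "opt_cost xs alts \<le> 1 + e"
proof (cases "f [1 - e, 3] alts = (2, 2)")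
  case False
  let ?xs = "[1 - e, 3]"
  have "\<bar>0 - 3\<bar> \<le> agent_cost 3 (f ?xs alts)"
    using False by (intro agent_cost_ge feasible_alts_uses_0 feasible_alts_outcome) simp
  also have "\<dots> \<le> max_cost ?xs (f ?xs alts)"
    by (rule agent_cost_le_max_cost) simp
  finally have "3 \<le> max_cost ?xs (f ?xs alts)"
    by simp
  moreover have "opt_cost ?xs alts \<le> 1 + e"
    using opt_cost_le[OF feasible_alts_2_2, of ?xs] max_cost_le[of ?xs "(2, 2)" "1 + e"] assms
    by (force simp: agent_cost_def)
  ultimately show thesis
    by (intro that[of ?xs]) simp_all
next
  case True
  let ?xs = "[-1, 1 + e]"
  have "\<bar>2 - (-1)\<bar> \<le> agent_cost (-1) (f ?xs alts)"
    using outcome_left_not_0_0[OF assms True]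
    by (intro agent_cost_ge feasible_alts_uses_2 feasible_alts_outcome) simp
  also have "\<dots> \<le> max_cost ?xs (f ?xs alts)"
    by (rule agent_cost_le_max_cost) simp
  finally have "3 \<le> max_cost ?xs (f ?xs alts)"
    by simp
  moreover have "opt_cost ?xs alts \<le> 1 + e"
    using opt_cost_le[OF feasible_alts_0_0, of ?xs] max_cost_le[of ?xs "(0, 0)" "1 + e"] assms
    by (force simp: agent_cost_def)
  ultimately show thesis
    by (intro that[of ?xs]) simp_all
qed

lemma approx_ratio_ge_3_divide:
  assumes "e > 0"
  shows "ereal (3 / (1 + e)) \<le> approx_ratio f"
proof -
  obtain xs where xs: "xs \<noteq> []" and mc: "3 \<le> max_cost xs (f xs alts)"
    and opt: "opt_cost xs alts \<le> 1 + e"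
    using instance_cost_ge_3_opt_le[OF assms] by blast
  have "ereal (3 / (1 + e)) \<le> ereal (max_cost xs (f xs alts)) / ereal (opt_cost xs alts)"
    using ereal_divide_ge[OF _ mc opt_cost_nonneg[OF valid_instance_alts[OF xs]] opt] by simp
  also have "\<dots> \<le> approx_ratio f"
    using approx_ratio_ge_instance[OF valid_instance_alts[OF xs]] .
  finally show ?thesis .
qed

end

theorem theorem3:
  fixes f :: "real list \<Rightarrow> real multiset \<Rightarrow> real \<times> real"
  assumes "mechanism f" and "strategyproof f"
  shows "approx_ratio f \<ge> 3"
proof (rule ereal_le_mult_one_interval)
  show "approx_ratio f \<noteq> -\<infinity>"
    using approx_ratio_ge_3_divide[OF assms, of 1] by auto
  fix z :: ereal
  assume "0 < z" and "z < 1"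
  then obtain t where z: "z = ereal t" and t: "0 < t" "t < 1"
    by (cases z) auto
  have "z * 3 = ereal (3 / (1 + (1 / t - 1)))"
    using z t by simp
  also have "\<dots> \<le> approx_ratio f"
    using t by (intro approx_ratio_ge_3_divide[OF assms]) simp
  finally show "z * 3 \<le> approx_ratio f" .
qed

end
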